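(* Let $G$ be a digraph with a fixed upward planar drawing and let $P$ and $Q$ be vertex disjoint directed paths in $G$. Then either $\mathrm{Right}(P)\cap Q=\emptyset$ or $\mathrm{Left}(P)\cap Q=\emptyset$.
   Context: An upward planar drawing of a digraph is a plane drawing (no edge crossings) in which every directed edge is a curve monotone increasing in the $y$-direction from tail to head. A path is identified with the set of points of $\mathbb{R}^2$ in its drawing. For a path $P$ with endpoints $(x,y)$ and $(x',y')$, $y\le y'$, define $\mathrm{Right}(P):=\{(u,v)\in\mathbb{R}^2: y\le v\le y' \text{ and } u'<u \text{ for all } u' \text{ with } (u',v)\in P\}$ and $\mathrm{Left}(P):=\{(u,v)\in\mathbb{R}^2: y\le v\le y' \text{ and } u'>u \text{ for all } u' \text{ with } (u',v)\in P\}$. *)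

theory Defs
  imports "HOL-Analysis.Analysis"
begin

text \<open>Points of the plane are pairs (x,y) :: real \<times> real; the y-coordinate is snd.
  A digraph is a vertex set V with an edge relation E \<subseteq> V \<times> V (edge (u,v) goes from tail u
  to head v).  A drawing assigns a point pos v to each vertex and a curve cur e
  (a path on [0,1]) to each edge.\<close>

definition upward_planar_drawing ::
  "'v set \<Rightarrow> ('v \<times> 'v) set \<Rightarrow> ('v \<Rightarrow> real \<times> real) \<Rightarrow> ('v \<times> 'v \<Rightarrow> real \<Rightarrow> real \<times> real) \<Rightarrow> bool"
where
  "upward_planar_drawing V E pos cur \<longleftrightarrow>
     E \<subseteq> V \<times> V \<and>
     inj_on pos V \<and>
     (\<forall>e\<in>E. arc (cur e) \<and> pathstart (cur e) = pos (fst e) \<and> pathfinish (cur e) = pos (snd e)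
        \<and> strict_mono_on {0..1} (\<lambda>t. snd (cur e t))) \<and>
     (\<forall>e\<in>E. \<forall>v\<in>V. pos v \<in> path_image (cur e) \<longrightarrow> v = fst e \<or> v = snd e) \<and>
     (\<forall>e\<in>E. \<forall>e'\<in>E. e \<noteq> e' \<longrightarrow>
        path_image (cur e) \<inter> path_image (cur e') \<subseteq> pos ` ({fst e, snd e} \<inter> {fst e', snd e'}))"

definition directed_path :: "'v set \<Rightarrow> ('v \<times> 'v) set \<Rightarrow> 'v list \<Rightarrow> bool" where
  "directed_path V E ps \<longleftrightarrow> ps \<noteq> [] \<and> distinct ps \<and> set ps \<subseteq> V \<and>
     (\<forall>i. Suc i < length ps \<longrightarrow> (ps ! i, ps ! Suc i) \<in> E)"

definition path_points ::
  "('v \<Rightarrow> real \<times> real) \<Rightarrow> ('v \<times> 'v \<Rightarrow> real \<Rightarrow> real \<times> real) \<Rightarrow> 'v list \<Rightarrow> (real \<times> real) set" where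
  "path_points pos cur ps = pos ` set ps \<union>
     (\<Union>i\<in>{i. Suc i < length ps}. path_image (cur (ps ! i, ps ! Suc i)))"

definition Right_of :: "(real \<times> real) set \<Rightarrow> real \<times> real \<Rightarrow> real \<times> real \<Rightarrow> (real \<times> real) set" where
  "Right_of P a b = {(u,v). snd a \<le> v \<and> v \<le> snd b \<and> (\<forall>u'. (u',v) \<in> P \<longrightarrow> u' < u)}"

definition Left_of :: "(real \<times> real) set \<Rightarrow> real \<times> real \<Rightarrow> real \<times> real \<Rightarrow> (real \<times> real) set" where
  "Left_of P a b = {(u,v). snd a \<le> v \<and> v \<le> snd b \<and> (\<forall>u'. (u',v) \<in> P \<longrightarrow> u' > u)}"

definition RightP where
  "RightP pos cur ps = Right_of (path_points pos cur ps) (pos (hd ps)) (pos (last ps))"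

definition LeftP where
  "LeftP pos cur ps = Left_of (path_points pos cur ps) (pos (hd ps)) (pos (last ps))"

end

theory Submission
  imports Defs
begin

text \<open>The drawing of P is the image of a curve whose height is strictly increasing, so P meets
  every horizontal line between its endpoints in exactly one point.  Points of the plane lying
  strictly to the right (left) of P on their own horizontal line form an open set, because P is
  compact.  Since Q is drawn upward as well, the part of Q between a point of Right(P) and a point
  of Left(P) is a connected set within the height range of P; it avoids P, so it would be covered
  by these two disjoint open sets, meeting both.\<close>

definition drawn_subgraph ::
  "('v \<Rightarrow> real \<times> real) \<Rightarrow> ('v \<times> 'v \<Rightarrow> real \<Rightarrow> real \<times> real) \<Rightarrow> ('v \<times> 'v) set \<Rightarrow> 'v set \<Rightarrow> (real \<times> real) set"
where
  "drawn_subgraph pos cur E A = pos ` A \<union> (\<Union>e\<in>E \<inter> A \<times> A. path_image (cur e))"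

lemma upward_planar_drawing_edgeD:
  assumes "upward_planar_drawing V E pos cur" "(v, w) \<in> E"
  shows "arc (cur (v, w))" "pathstart (cur (v, w)) = pos v" "pathfinish (cur (v, w)) = pos w"
    "strict_mono_on {0..1} (\<lambda>t. snd (cur (v, w) t))"
  using assms unfolding upward_planar_drawing_def by fastforce+

lemma drawn_subgraphs_disjoint:
  assumes D: "upward_planar_drawing V E pos cur"
    and "A \<subseteq> V" "B \<subseteq> V" "A \<inter> B = {}"
  shows "drawn_subgraph pos cur E A \<inter> drawn_subgraph pos cur E B = {}"
proof -
  have inj: "inj_on pos V"
    and vertex: "\<And>e v. e \<in> E \<Longrightarrow> v \<in> V \<Longrightarrow> pos v \<in> path_image (cur e) \<Longrightarrow> v = fst e \<or> v = snd e"
    and cross: "\<And>e e'. e \<in> E \<Longrightarrow> e' \<in> E \<Longrightarrow> e \<noteq> e' \<Longrightarrow>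
        path_image (cur e) \<inter> path_image (cur e') \<subseteq> pos ` ({fst e, snd e} \<inter> {fst e', snd e'})"
    using D unfolding upward_planar_drawing_def by blast+
  have off_edge: "pos a \<notin> path_image (cur e)" if "a \<in> V" "e \<in> E" "a \<notin> {fst e, snd e}" for a e
    using vertex[OF that(2,1)] that(3) by blast
  have "pos a \<noteq> pos b" if "a \<in> A" "b \<in> B" for a b
    using inj_onD[OF inj] that assms(2-4) by blast
  moreover have "pos a \<notin> path_image (cur e)" if "a \<in> A" "e \<in> E \<inter> B \<times> B" for a e
    using off_edge[of a e] that assms(2,4) by (auto simp: mem_Times_iff)
  moreover have "pos b \<notin> path_image (cur e)" if "b \<in> B" "e \<in> E \<inter> A \<times> A" for b e
    using off_edge[of b e] that assms(3,4) by (auto simp: mem_Times_iff)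
  moreover have "path_image (cur e) \<inter> path_image (cur e') = {}"
    if "e \<in> E \<inter> A \<times> A" "e' \<in> E \<inter> B \<times> B" for e e'
  proof -
    have "e \<noteq> e'" "{fst e, snd e} \<inter> {fst e', snd e'} = {}"
      using that assms(4) by (auto simp: mem_Times_iff)
    then show ?thesis using cross[of e e'] that by auto
  qed
  ultimately show ?thesis
    unfolding drawn_subgraph_def by blast
qed

lemma path_points_subset_drawn_subgraph:
  assumes "directed_path V E ps"
  shows "path_points pos cur ps \<subseteq> drawn_subgraph pos cur E (set ps)"
  using assms unfolding directed_path_def path_points_def drawn_subgraph_def
  by (fastforce intro!: nth_mem)

lemma directed_paths_disjoint:
  assumes "upward_planar_drawing V E pos cur"
    and "directed_path V E ps" "directed_path V E qs" "set ps \<inter> set qs = {}"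
  shows "path_points pos cur ps \<inter> path_points pos cur qs = {}"
  using drawn_subgraphs_disjoint[OF assms(1) _ _ assms(4)]
    path_points_subset_drawn_subgraph[OF assms(2)] path_points_subset_drawn_subgraph[OF assms(3)]
    assms(2,3) unfolding directed_path_def by blast

fun drawn_path ::
  "('v \<Rightarrow> real \<times> real) \<Rightarrow> ('v \<times> 'v \<Rightarrow> real \<Rightarrow> real \<times> real) \<Rightarrow> 'v list \<Rightarrow> real \<Rightarrow> real \<times> real"
where
  "drawn_path pos cur [] = (\<lambda>t. 0)"
| "drawn_path pos cur [v] = (\<lambda>t. pos v)"
| "drawn_path pos cur [v, w] = cur (v, w)"
| "drawn_path pos cur (v # w # u # vs) = cur (v, w) +++ drawn_path pos cur (w # u # vs)"

lemma directed_path_Cons2D: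
  assumes "directed_path V E (v # w # vs)"
  shows "(v, w) \<in> E" "directed_path V E (w # vs)"
proof -
  show "(v, w) \<in> E"
    using assms unfolding directed_path_def by force
  show "directed_path V E (w # vs)"
    using assms unfolding directed_path_def
    by (auto dest!: spec[of _ "Suc _"])
qed

lemma directed_path_singleton:
  assumes "directed_path V E ps" "\<not> length ps \<ge> 2"
  shows "ps = [hd ps]"
  using assms by (cases ps; cases "tl ps") (auto simp: directed_path_def)

lemma path_points_singleton: "path_points pos cur [v] = {pos v}"
  by (simp add: path_points_def)

lemma path_points_Cons2:
  "path_points pos cur (v # w # vs) =
     insert (pos v) (path_image (cur (v, w)) \<union> path_points pos cur (w # vs))"
proof -
  have "{i. Suc i < length (v # w # vs)} = insert 0 (Suc ` {i. Suc i < length (w # vs)})"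
    by (auto simp: image_iff) (metis Suc_less_eq less_Suc_eq_0_disj)
  then show ?thesis
    by (auto simp: path_points_def)
qed

lemma strict_mono_on_snd_joinpaths:
  fixes g h :: "real \<Rightarrow> real \<times> real"
  assumes g: "strict_mono_on {0..1} (\<lambda>t. snd (g t))" and h: "strict_mono_on {0..1} (\<lambda>t. snd (h t))"
    and "pathfinish g = pathstart h"
  shows "strict_mono_on {0..1} (\<lambda>t. snd ((g +++ h) t))"
proof (rule strict_mono_onI)
  fix r s :: real
  assume rs: "r \<in> {0..1}" "s \<in> {0..1}" "r < s"
  consider "s \<le> 1/2" | "r \<le> 1/2" "1/2 < s" | "1/2 < r"
    using rs by linarith
  then show "snd ((g +++ h) r) < snd ((g +++ h) s)"
  proof cases
    case 1
    then show ?thesis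
      using rs strict_mono_onD[OF g, of "2 * r" "2 * s"] by (simp add: joinpaths_def)
  next
    case 2
    have "snd (g (2 * r)) \<le> snd (g 1)"
      using strict_mono_on_leD[OF g, of "2 * r" 1] rs 2 by simp
    also have "\<dots> = snd (h 0)"
      using assms(3) by (simp add: pathfinish_def pathstart_def)
    also have "\<dots> < snd (h (2 * s - 1))"
      using strict_mono_onD[OF h, of 0 "2 * s - 1"] rs 2 by simp
    finally show ?thesis
      using 2 by (simp add: joinpaths_def)
  next
    case 3
    then show ?thesis
      using rs strict_mono_onD[OF h, of "2 * r - 1" "2 * s - 1"] by (simp add: joinpaths_def)
  qed
qed

lemma directed_path_drawn_path:
  assumes "upward_planar_drawing V E pos cur" "directed_path V E ps"
  shows "path (drawn_path pos cur ps) \<and> pathstart (drawn_path pos cur ps) = pos (hd ps)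
    \<and> pathfinish (drawn_path pos cur ps) = pos (last ps)
    \<and> path_image (drawn_path pos cur ps) = path_points pos cur ps"
  using assms
proof (induction pos cur ps rule: drawn_path.induct)
  case (1 pos cur)
  then show ?case by (simp add: directed_path_def)
next
  case (2 pos cur v)
  then show ?case
    by (simp add: path_points_singleton pathstart_def pathfinish_def path_image_def path_const)
next
  case (3 pos cur v w)
  have e: "(v, w) \<in> E" using directed_path_Cons2D(1)[OF "3.prems"(2)] .
  have "pos v \<in> path_image (cur (v, w))" "pos w \<in> path_image (cur (v, w))"
    using upward_planar_drawing_edgeD[OF "3.prems"(1) e]
    by (metis pathstart_in_path_image pathfinish_in_path_image)+
  then have "path_points pos cur [v, w] = path_image (cur (v, w))"
    by (auto simp: path_points_Cons2 path_points_singleton)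
  then show ?case
    using upward_planar_drawing_edgeD[OF "3.prems"(1) e] by (simp add: arc_imp_path)
next
  case (4 pos cur v w u vs)
  have e: "(v, w) \<in> E" and tail: "directed_path V E (w # u # vs)"
    using directed_path_Cons2D[OF "4.prems"(2)] by blast+
  note edge = upward_planar_drawing_edgeD[OF "4.prems"(1) e]
  note IH = "4.IH"[OF "4.prems"(1) tail]
  have join: "pathfinish (cur (v, w)) = pathstart (drawn_path pos cur (w # u # vs))"
    using edge IH by simp
  have "pos v \<in> path_image (cur (v, w))"
    using edge by (metis pathstart_in_path_image)
  then have "path_image (cur (v, w)) \<union> path_points pos cur (w # u # vs) = path_points pos cur (v # w # u # vs)"
    unfolding path_points_Cons2[of pos cur v w "u # vs"] by blast
  then have "path_image (drawn_path pos cur (v # w # u # vs)) = path_points pos cur (v # w # u # vs)"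
    using IH by (simp add: path_image_join[OF join])
  then show ?case
    using edge IH join by (simp add: arc_imp_path)
qed

lemma drawn_path_snd_strict_mono:
  assumes "upward_planar_drawing V E pos cur" "directed_path V E ps" "length ps \<ge> 2"
  shows "strict_mono_on {0..1} (\<lambda>t. snd (drawn_path pos cur ps t))"
  using assms
proof (induction pos cur ps rule: drawn_path.induct)
  case (3 pos cur v w)
  show ?case
    using upward_planar_drawing_edgeD[OF "3.prems"(1) directed_path_Cons2D(1)[OF "3.prems"(2)]]
    by simp
next
  case (4 pos cur v w u vs)
  have e: "(v, w) \<in> E" and tail: "directed_path V E (w # u # vs)"
    using directed_path_Cons2D[OF "4.prems"(2)] by blast+
  show ?case
    using strict_mono_on_snd_joinpaths upward_planar_drawing_edgeD[OF "4.prems"(1) e]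
      "4.IH"[OF "4.prems"(1) tail] directed_path_drawn_path[OF "4.prems"(1) tail] by simp
qed auto

lemma drawn_path_snd_mono:
  assumes "upward_planar_drawing V E pos cur" "directed_path V E ps"
  shows "mono_on {0..1} (\<lambda>t. snd (drawn_path pos cur ps t))"
proof (cases "length ps \<ge> 2")
  case True
  then show ?thesis
    using drawn_path_snd_strict_mono[OF assms] strict_mono_on_imp_mono_on by blast
next
  case False
  then obtain v where "ps = [v]"
    using directed_path_singleton[OF assms(2)] by blast
  then show ?thesis
    by (simp add: mono_on_const)
qed

lemma inj_on_snd_path_image:
  fixes g :: "real \<Rightarrow> real \<times> real"
  assumes "strict_mono_on {0..1} (\<lambda>t. snd (g t))"
  shows "inj_on snd (path_image g)"
proof (rule inj_onI)
  fix p q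
  assume "p \<in> path_image g" "q \<in> path_image g" "snd p = snd q"
  then obtain s t where "s \<in> {0..1}" "t \<in> {0..1}" "p = g s" "q = g t" "snd (g s) = snd (g t)"
    by (auto simp: path_image_def)
  then show "p = q"
    using inj_onD[OF strict_mono_on_imp_inj_on[OF assms]] by metis
qed

lemma path_image_snd_contains_Icc:
  fixes g :: "real \<Rightarrow> real \<times> real"
  assumes "path g"
  shows "{snd (pathstart g)..snd (pathfinish g)} \<subseteq> snd ` path_image g"
  using assms
  by (intro connected_contains_Icc connected_continuous_image continuous_on_snd continuous_on_id
      connected_path_image imageI pathstart_in_path_image pathfinish_in_path_image)

lemma subpath_image_between_heights:
  fixes g :: "real \<Rightarrow> real \<times> real"
  assumes "path g" "mono_on {0..1} (\<lambda>t. snd (g t))" "a \<in> path_image g" "b \<in> path_image g"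
  obtains S where "connected S" "a \<in> S" "b \<in> S" "S \<subseteq> path_image g"
    "snd ` S \<subseteq> {min (snd a) (snd b)..max (snd a) (snd b)}"
proof -
  obtain s t where st: "s \<in> {0..1}" "t \<in> {0..1}" "a = g s" "b = g t"
    using assms(3,4) by (auto simp: path_image_def)
  define S where "S = path_image (subpath s t g)"
  have "connected S" "a \<in> S" "b \<in> S"
    using assms(1) st unfolding S_def
    by (auto intro: pathstart_in_path_image[of "subpath s t g", simplified]
        pathfinish_in_path_image[of "subpath s t g", simplified])
  moreover have "S \<subseteq> path_image g"
    unfolding S_def path_image_subpath using st by (auto simp: path_image_def)
  moreover have "snd ` S \<subseteq> {min (snd a) (snd b)..max (snd a) (snd b)}"
  proof
    fix y
    assume "y \<in> snd ` S"
    then obtain r where r: "min s t \<le> r" "r \<le> max s t" "y = snd (g r)"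
      by (auto simp: S_def path_image_subpath split: if_splits)
    then have "snd (g (min s t)) \<le> y" "y \<le> snd (g (max s t))"
      using st(1,2) by (auto intro!: mono_onD[OF assms(2)])
    then show "y \<in> {min (snd a) (snd b)..max (snd a) (snd b)}"
      using st by (auto simp: min_def max_def split: if_splits)
  qed
  ultimately show thesis using that by blast
qed

lemma directed_path_points_inj_snd:
  assumes "upward_planar_drawing V E pos cur" "directed_path V E ps"
  shows "inj_on snd (path_points pos cur ps)"
proof (cases "length ps \<ge> 2")
  case True
  then show ?thesis
    using inj_on_snd_path_image[OF drawn_path_snd_strict_mono[OF assms]]
      directed_path_drawn_path[OF assms] by simp
next
  case False
  then obtain v where "ps = [v]"
    using directed_path_singleton[OF assms(2)] by blast
  then show ?thesis
    by (simp add: path_points_singleton)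
qed

lemma open_avoiding_translates:
  fixes P C :: "'a::real_normed_vector set"
  assumes "compact P" "closed C"
  shows "open {z. \<forall>p\<in>P. z - p \<notin> C}"
proof -
  have "z \<notin> {z. \<forall>p\<in>P. z - p \<notin> C} \<longleftrightarrow> (\<exists>c\<in>C. \<exists>p\<in>P. z = c + p)" for z
    by (auto, metis diff_add_cancel, force)
  then have "- {z. \<forall>p\<in>P. z - p \<notin> C} = (\<Union>c\<in>C. \<Union>p\<in>P. {c + p})"
    by blast
  then have "closed (- {z. \<forall>p\<in>P. z - p \<notin> C})"
    using closed_compact_sums[OF assms(2,1)] by simp
  then show ?thesis
    by (simp add: closed_def)
qed

lemma connected_not_on_both_sides:
  fixes P S :: "(real \<times> real) set"
  assumes "compact P" "inj_on snd P" "connected S" "S \<inter> P = {}" "snd ` S \<subseteq> snd ` P"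
    and "a \<in> S" "\<forall>p\<in>P. snd p = snd a \<longrightarrow> fst p < fst a"
    and "b \<in> S" "\<forall>p\<in>P. snd p = snd b \<longrightarrow> fst b < fst p"
  shows False
proof -
  define R where "R = {z. \<forall>p\<in>P. z - p \<notin> {..0} \<times> {0}}"
  define L where "L = {z. \<forall>p\<in>P. z - p \<notin> {0..} \<times> {0}}"
  have R_iff: "z \<in> R \<longleftrightarrow> (\<forall>p\<in>P. snd p = snd z \<longrightarrow> fst p < fst z)" for z
    by (force simp: R_def mem_Times_iff)
  have L_iff: "z \<in> L \<longleftrightarrow> (\<forall>p\<in>P. snd p = snd z \<longrightarrow> fst z < fst p)" for z
    by (force simp: L_def mem_Times_iff)
  have "open R" "open L"
    unfolding R_def L_def using assms(1)
    by (auto intro!: open_avoiding_translates closed_Times)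
  moreover have "S \<subseteq> R \<union> L" "R \<inter> L \<inter> S = {}"
  proof -
    have "z \<in> R \<union> L \<and> z \<notin> R \<inter> L" if "z \<in> S" for z
    proof -
      obtain p where p: "p \<in> P" "snd p = snd z"
        using assms(5) \<open>z \<in> S\<close> by force
      have "fst p \<noteq> fst z"
        using p assms(4) \<open>z \<in> S\<close> by (metis disjoint_iff prod_eq_iff)
      have unique: "p' = p" if "p' \<in> P" "snd p' = snd z" for p'
        using inj_onD[OF assms(2)] p that by simp
      have "z \<in> R \<longleftrightarrow> fst p < fst z" "z \<in> L \<longleftrightarrow> fst z < fst p"
        unfolding R_iff L_iff using p unique by blast+
      then show ?thesis
        using \<open>fst p \<noteq> fst z\<close> by auto
    qed
    then show "S \<subseteq> R \<union> L" "R \<inter> L \<inter> S = {}" by blast+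
  qed
  moreover have "a \<in> R" "b \<in> L"
    using assms(7,9) by (simp_all add: R_iff L_iff)
  ultimately show False
    using assms(3,6,8) unfolding connected_def by blast
qed

lemma mem_Right_of:
  "z \<in> Right_of P a b \<longleftrightarrow>
     snd a \<le> snd z \<and> snd z \<le> snd b \<and> (\<forall>p\<in>P. snd p = snd z \<longrightarrow> fst p < fst z)"
  by (cases z) (force simp: Right_of_def)

lemma mem_Left_of:
  "z \<in> Left_of P a b \<longleftrightarrow>
     snd a \<le> snd z \<and> snd z \<le> snd b \<and> (\<forall>p\<in>P. snd p = snd z \<longrightarrow> fst z < fst p)"
  by (cases z) (force simp: Left_of_def)

theorem lemma5:
  fixes V :: "'v set" and E :: "('v \<times> 'v) set"
    and pos :: "'v \<Rightarrow> real \<times> real" and cur :: "'v \<times> 'v \<Rightarrow> real \<Rightarrow> real \<times> real"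
    and ps qs :: "'v list"
  assumes "upward_planar_drawing V E pos cur"
    and "directed_path V E ps" and "directed_path V E qs"
    and "set ps \<inter> set qs = {}"
  shows "RightP pos cur ps \<inter> path_points pos cur qs = {}
       \<or> LeftP pos cur ps \<inter> path_points pos cur qs = {}"
proof (rule ccontr)
  let ?P = "path_points pos cur ps" and ?Q = "path_points pos cur qs"
  let ?y0 = "snd (pos (hd ps))" and ?y1 = "snd (pos (last ps))"
  note P = directed_path_drawn_path[OF assms(1,2)]
    and Q = directed_path_drawn_path[OF assms(1,3)]
  assume "\<not> ?thesis"
  then obtain a b where "a \<in> RightP pos cur ps" "a \<in> ?Q" "b \<in> LeftP pos cur ps" "b \<in> ?Q"
    by blast
  then have a: "a \<in> ?Q" "?y0 \<le> snd a" "snd a \<le> ?y1" "\<forall>p\<in>?P. snd p = snd a \<longrightarrow> fst p < fst a"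
    and b: "b \<in> ?Q" "?y0 \<le> snd b" "snd b \<le> ?y1" "\<forall>p\<in>?P. snd p = snd b \<longrightarrow> fst b < fst p"
    by (simp_all add: RightP_def LeftP_def mem_Right_of mem_Left_of)
  obtain S where S: "connected S" "a \<in> S" "b \<in> S" "S \<subseteq> ?Q"
    and S_heights: "snd ` S \<subseteq> {min (snd a) (snd b)..max (snd a) (snd b)}"
    using subpath_image_between_heights[OF _ drawn_path_snd_mono[OF assms(1,3)]] Q a(1) b(1)
    by metis
  note S_heights
  also have "{min (snd a) (snd b)..max (snd a) (snd b)} \<subseteq> {?y0..?y1}"
    using a(2,3) b(2,3) by (simp add: min_def max_def)
  also have "\<dots> \<subseteq> snd ` ?P"
    using path_image_snd_contains_Icc P by metis
  finally have "snd ` S \<subseteq> snd ` ?P" .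
  moreover have "S \<inter> ?P = {}"
    using directed_paths_disjoint[OF assms] S(4) by blast
  moreover have "compact ?P"
    using compact_path_image P by metis
  ultimately show False
    using connected_not_on_both_sides[OF _ directed_path_points_inj_snd[OF assms(1,2)] S(1)]
      S(2,3) a(4) b(4)
    by blast
qed

end
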